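(* Let $X$ be a Tychonoff space and $x \in X$. If player II has a winning strategy in the game $\mathsf{G}_1(\Omega_x, \Omega_x)$, then $X$ is productively countably tight at $x$.
   Context: For a point $x$ of a space $X$, $\Omega_x$ denotes the collection of all sets $A \subset X$ such that $x \notin A$ and $x \in \overline{A}$. The game $\mathsf{G}_1(\Omega_x,\Omega_x)$ is played in innings $n \in \omega$: in inning $n$ player I chooses $A_n \in \Omega_x$ and then player II chooses $a_n \in A_n$; player II wins if $\{a_n : n \in \omega\} \in \Omega_x$. A space $Y$ has countable tightness at $y \in Y$ if whenever $y \in \overline{A}$ there is a countable $B \subset A$ with $y \in \overline{B}$. $X$ is productively countably tight at $x$ if for every space $Y$ and every $y \in Y$ such that $Y$ has countable tightness at $y$, the product $X \times Y$ has countable tightness at $\langle x, y\rangle$. *)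

theory Defs
  imports "HOL-Analysis.Analysis"
begin

definition tychonoff_space :: "'a topology \<Rightarrow> bool" where
  "tychonoff_space X \<longleftrightarrow> completely_regular_space X \<and> Hausdorff_space X"

definition Omega_pt :: "'a topology \<Rightarrow> 'a \<Rightarrow> 'a set set" where
  "Omega_pt X x = {A. A \<subseteq> topspace X \<and> x \<notin> A \<and> x \<in> X closure_of A}"

text \<open>A (perfect-information) strategy for player II in G_1(Omega_x, Omega_x):
  given the list of player I's moves so far (A_0, ..., A_n), it returns a_n.
  Player II's own earlier moves are determined by I's earlier moves.\<close>
definition G1_Omega_II_winning :: "'a topology \<Rightarrow> 'a \<Rightarrow> ('a set list \<Rightarrow> 'a) \<Rightarrow> bool" where
  "G1_Omega_II_winning X x \<sigma> \<longleftrightarrow>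
     (\<forall>As. As \<noteq> [] \<and> (\<forall>A\<in>set As. A \<in> Omega_pt X x) \<longrightarrow> \<sigma> As \<in> last As) \<and>
     (\<forall>A :: nat \<Rightarrow> 'a set. (\<forall>n. A n \<in> Omega_pt X x) \<longrightarrow>
        range (\<lambda>n. \<sigma> (map A [0..<Suc n])) \<in> Omega_pt X x)"

definition G1_Omega_II_has_winning_strategy :: "'a topology \<Rightarrow> 'a \<Rightarrow> bool" where
  "G1_Omega_II_has_winning_strategy X x \<longleftrightarrow> (\<exists>\<sigma>. G1_Omega_II_winning X x \<sigma>)"

definition countably_tight_at :: "'a topology \<Rightarrow> 'a \<Rightarrow> bool" where
  "countably_tight_at Y y \<longleftrightarrow>
     (\<forall>A. A \<subseteq> topspace Y \<and> y \<in> Y closure_of A \<longrightarrow>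
        (\<exists>B. B \<subseteq> A \<and> countable B \<and> y \<in> Y closure_of B))"

end

theory Submission
  imports Defs
begin

text \<open>
  Let \<open>A \<subseteq> X \<times> Y\<close> accumulate at \<open>(x, y)\<close>. If \<open>y\<close> is in the closure of the slice of \<open>A\<close> over
  \<open>x\<close>, countable tightness of \<open>Y\<close> alone suffices. Otherwise we may assume the slice is empty,
  and every neighbourhood \<open>V\<close> of \<open>y\<close> yields a move \<open>D V \<in> \<Omega>\<^sub>x\<close> of player I: the
  projection of \<open>A \<inter> (X \<times> V)\<close>. Each answer of the winning strategy to \<open>D V\<close> lifts to a point
  of \<open>A\<close> with second coordinate in \<open>V\<close>, and countable tightness at \<open>y\<close> lets player I restrict
  himself to countably many moves \<open>D V\<^sub>k\<close> after each history. The lifted answers along this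
  countably branching tree of plays form a countable subset of \<open>A\<close>; a basic neighbourhood
  \<open>U \<times> W\<close> of \<open>(x, y)\<close> meets it because along the branch that always chooses a \<open>V\<^sub>k\<close> whose
  lifted answer lies in \<open>W\<close>, the strategy wins, so one of its answers lies in \<open>U\<close>.
\<close>

text \<open>
  Player I's moves form a countably branching tree: after history \<open>h\<close> his \<open>k\<close>-th option is
  \<open>M h k\<close>, and \<open>tree_history M ks\<close> is the history reached by choosing options \<open>ks\<close>.
\<close>
definition tree_history :: "('h list \<Rightarrow> nat \<Rightarrow> 'h) \<Rightarrow> nat list \<Rightarrow> 'h list" where
  "tree_history M ks = foldl (\<lambda>h k. h @ [M h k]) [] ks"

lemma tree_history_Nil [simp]: "tree_history M [] = []"
  by (simp add: tree_history_def)

lemma tree_history_snoc [simp]: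
  "tree_history M (ks @ [k]) = tree_history M ks @ [M (tree_history M ks) k]"
  by (simp add: tree_history_def)

lemma tree_history_subset:
  assumes "\<And>h k. set h \<subseteq> S \<Longrightarrow> M h k \<in> S"
  shows "set (tree_history M ks) \<subseteq> S"
  by (induction ks rule: rev_induct) (simp_all add: assms)

lemma G1_Omega_II_winning_response_in_last:
  assumes "G1_Omega_II_winning X x \<sigma>" and "set h \<subseteq> Omega_pt X x" and "A \<in> Omega_pt X x"
  shows "\<sigma> (h @ [A]) \<in> A"
proof -
  have "\<forall>As. As \<noteq> [] \<and> (\<forall>A\<in>set As. A \<in> Omega_pt X x) \<longrightarrow> \<sigma> As \<in> last As"
    using assms(1) unfolding G1_Omega_II_winning_def by blast
  from this[rule_format, of "h @ [A]"] show ?thesis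
    using assms(2,3) by auto
qed

lemma G1_Omega_II_winning_tree_response_in:
  assumes win: "G1_Omega_II_winning X x \<sigma>"
    and M: "\<And>h k. set h \<subseteq> Omega_pt X x \<Longrightarrow> M h k \<in> Omega_pt X x"
    and U: "openin X U" "x \<in> U"
  shows "\<exists>ks. \<sigma> (tree_history M (ks @ [kk ks])) \<in> U"
proof -
  define ks where "ks = rec_nat [] (\<lambda>_ ks. ks @ [kk ks])"
  define A where "A n = M (tree_history M (ks n)) (kk (ks n))" for n
  have ks_0: "ks 0 = []" and ks_Suc: "ks (Suc n) = ks n @ [kk (ks n)]" for n
    by (simp_all add: ks_def)
  have history: "tree_history M (ks n) = map A [0..<n]" for n
    by (induction n) (simp_all add: ks_0 ks_Suc A_def)
  have "A n \<in> Omega_pt X x" for n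
    using M[OF tree_history_subset[OF M]] by (simp add: A_def)
  then have "range (\<lambda>n. \<sigma> (map A [0..<Suc n])) \<in> Omega_pt X x"
    using win unfolding G1_Omega_II_winning_def by blast
  then obtain n where "\<sigma> (map A [0..<Suc n]) \<in> U"
    using U unfolding Omega_pt_def in_closure_of by blast
  moreover have "map A [0..<Suc n] = tree_history M (ks n @ [kk (ks n)])"
    by (metis history ks_Suc)
  ultimately show ?thesis by auto
qed

lemma countably_tight_atE:
  assumes "countably_tight_at Y y" "S \<subseteq> topspace Y" "y \<in> Y closure_of S"
  obtains B where "B \<subseteq> S" "countable B" "y \<in> Y closure_of B"
  using assms unfolding countably_tight_at_def by blast

lemma countably_tight_at_neighbourhood_sequence:
  assumes "countably_tight_at Y y" "y \<in> topspace Y"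
    and f: "\<And>V. openin Y V \<Longrightarrow> y \<in> V \<Longrightarrow> f V \<in> V"
  shows "\<exists>g :: nat \<Rightarrow> 'b set. (\<forall>k. openin Y (g k) \<and> y \<in> g k) \<and> y \<in> Y closure_of range (f \<circ> g)"
proof -
  define S where "S = f ` {V. openin Y V \<and> y \<in> V}"
  have "S \<subseteq> topspace Y"
    unfolding S_def using f openin_subset by blast
  moreover have "y \<in> Y closure_of S"
    unfolding S_def in_closure_of using assms(2) f by blast
  ultimately obtain B where B: "B \<subseteq> S" "countable B" "y \<in> Y closure_of B"
    using assms(1) countably_tight_atE by metis
  have "B \<noteq> {}"
    using B(3) by (metis closure_of_empty empty_iff)
  have "\<exists>V. openin Y V \<and> y \<in> V \<and> f V = from_nat_into B k" for k
  proof -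
    have "from_nat_into B k \<in> S"
      using B(1) from_nat_into[OF \<open>B \<noteq> {}\<close>] by (rule subsetD)
    then show ?thesis
      unfolding S_def by auto
  qed
  then obtain g where g: "\<And>k. openin Y (g k) \<and> y \<in> g k" "\<And>k. f (g k) = from_nat_into B k"
    by metis
  have "range (f \<circ> g) = range (from_nat_into B)"
    using g(2) by (simp add: image_comp[symmetric])
  also have "\<dots> = B"
    using \<open>B \<noteq> {}\<close> B(2) by simp
  finally have "y \<in> Y closure_of range (f \<circ> g)"
    using B(3) by simp
  with g(1) show ?thesis by blast
qed

lemma countable_closure_of_prod_slice:
  assumes "countably_tight_at Y y" "x \<in> topspace X" "A \<subseteq> topspace (prod_topology X Y)"
    and "y \<in> Y closure_of {b. (x, b) \<in> A}"
  shows "\<exists>B \<subseteq> A. countable B \<and> (x, y) \<in> prod_topology X Y closure_of B"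
proof -
  have "{b. (x, b) \<in> A} \<subseteq> topspace Y"
    using assms(3) by (auto simp: topspace_prod_topology)
  then obtain B where B: "B \<subseteq> {b. (x, b) \<in> A}" "countable B" "y \<in> Y closure_of B"
    using countably_tight_atE[OF assms(1) _ assms(4)] by blast
  have "x \<in> X closure_of {x}"
    using assms(2) closure_of_subset[of "{x}" X] by simp
  then have "(x, y) \<in> prod_topology X Y closure_of ({x} \<times> B)"
    using B(3) by (simp add: closure_of_Times)
  moreover have "{x} \<times> B \<subseteq> A" using B(1) by auto
  ultimately show ?thesis using B(2) by (intro exI[of _ "{x} \<times> B"]) simp
qed

lemma Omega_pt_projection:
  assumes "A \<subseteq> topspace (prod_topology X Y)" "(x, y) \<in> prod_topology X Y closure_of A"
    and "\<And>b. (x, b) \<notin> A" and "openin Y V" "y \<in> V"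
  shows "{a. \<exists>b\<in>V. (a, b) \<in> A} \<in> Omega_pt X x"
proof -
  let ?D = "{a. \<exists>b\<in>V. (a, b) \<in> A}"
  have "x \<in> X closure_of ?D"
    unfolding in_closure_of
  proof (intro conjI allI impI)
    show "x \<in> topspace X"
      using closure_of_subset_topspace assms(2) by fastforce
    fix U assume "x \<in> U \<and> openin X U"
    then have "openin (prod_topology X Y) (U \<times> V)" "(x, y) \<in> U \<times> V"
      using assms(4,5) by (simp_all add: openin_prod_Times_iff)
    then obtain p where "p \<in> A" "p \<in> U \<times> V"
      using assms(2) unfolding in_closure_of by metis
    then show "\<exists>a. a \<in> ?D \<and> a \<in> U"
      by auto
  qed
  moreover have "?D \<subseteq> topspace X"
    using assms(1) by (auto simp: topspace_prod_topology)
  ultimately show ?thesis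
    using assms(3) by (auto simp: Omega_pt_def)
qed

lemma G1_Omega_II_winning_countable_closure_of:
  assumes win: "G1_Omega_II_winning X x \<sigma>"
    and Y: "countably_tight_at Y y" "y \<in> topspace Y"
    and A: "A \<subseteq> topspace (prod_topology X Y)" "(x, y) \<in> prod_topology X Y closure_of A"
    and slice: "\<And>b. (x, b) \<notin> A"
  shows "\<exists>B \<subseteq> A. countable B \<and> (x, y) \<in> prod_topology X Y closure_of B"
proof -
  define D where "D V = {a. \<exists>b\<in>V. (a, b) \<in> A}" for V
  have D: "openin Y V \<Longrightarrow> y \<in> V \<Longrightarrow> D V \<in> Omega_pt X x" for V
    unfolding D_def using Omega_pt_projection[OF A slice] .
  have "\<exists>b. b \<in> V \<and> (\<sigma> (h @ [D V]), b) \<in> A"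
    if "set h \<subseteq> Omega_pt X x" "openin Y V" "y \<in> V" for h V
    using G1_Omega_II_winning_response_in_last[OF win that(1) D[OF that(2,3)]]
    unfolding D_def by blast
  then obtain lift where lift: "\<And>h V. set h \<subseteq> Omega_pt X x \<Longrightarrow> openin Y V \<Longrightarrow> y \<in> V \<Longrightarrow>
                                   lift h V \<in> V \<and> (\<sigma> (h @ [D V]), lift h V) \<in> A"
    by metis
  have "\<exists>g :: nat \<Rightarrow> 'b set. (\<forall>k. openin Y (g k) \<and> y \<in> g k) \<and> y \<in> Y closure_of range (lift h \<circ> g)"
    if "set h \<subseteq> Omega_pt X x" for h
    by (rule countably_tight_at_neighbourhood_sequence[OF Y]) (use lift[OF that] in blast)
  then obtain g :: "'a set list \<Rightarrow> nat \<Rightarrow> 'b set"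
    where g: "\<And>h. set h \<subseteq> Omega_pt X x \<Longrightarrow>
                (\<forall>k. openin Y (g h k) \<and> y \<in> g h k) \<and> y \<in> Y closure_of range (lift h \<circ> g h)"
    by metis
  define M where "M h k = D (g h k)" for h k
  have M: "set h \<subseteq> Omega_pt X x \<Longrightarrow> M h k \<in> Omega_pt X x" for h k
    using D g by (simp add: M_def)
  note valid = tree_history_subset[of "Omega_pt X x" M, OF M]
  define point where
    "point ks k = (\<sigma> (tree_history M (ks @ [k])), lift (tree_history M ks) (g (tree_history M ks) k))"
    for ks k
  define B where "B = range (case_prod point)"
  have "point ks k \<in> A" for ks k
  proof -
    let ?h = "tree_history M ks"
    have "openin Y (g ?h k)" "y \<in> g ?h k"
      using g[OF valid] by auto
    from lift[OF valid this] show ?thesis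
      by (simp add: point_def M_def)
  qed
  then have "B \<subseteq> A"
    by (auto simp: B_def)
  moreover have "countable B" by (simp add: B_def)
  moreover have "(x, y) \<in> prod_topology X Y closure_of B"
    unfolding in_closure_of
  proof (intro conjI allI impI)
    show "(x, y) \<in> topspace (prod_topology X Y)"
      using A(2) closure_of_subset_topspace by fast
    fix N assume "(x, y) \<in> N \<and> openin (prod_topology X Y) N"
    then obtain U W where UW: "openin X U" "openin Y W" "x \<in> U" "y \<in> W" "U \<times> W \<subseteq> N"
      by (metis openin_prod_topology_alt)
    have "\<exists>k. lift (tree_history M ks) (g (tree_history M ks) k) \<in> W" for ks
      using g[OF valid] UW(2,4) unfolding in_closure_of by auto
    then obtain kk where kk: "\<And>ks. lift (tree_history M ks) (g (tree_history M ks) (kk ks)) \<in> W"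
      by metis
    obtain ks where "\<sigma> (tree_history M (ks @ [kk ks])) \<in> U"
      using G1_Omega_II_winning_tree_response_in[where M = M and kk = kk, OF win _ UW(1,3)] M
      by blast
    then have "point ks (kk ks) \<in> N"
      using kk UW(5) by (auto simp: point_def)
    moreover have "point ks (kk ks) \<in> B"
      unfolding B_def by (rule range_eqI[of _ _ "(ks, kk ks)"]) simp
    ultimately show "\<exists>p. p \<in> B \<and> p \<in> N" by blast
  qed
  ultimately show ?thesis
    by auto
qed

lemma G1_Omega_II_winning_productively_countably_tight:
  assumes win: "G1_Omega_II_winning X x \<sigma>" and "x \<in> topspace X"
    and Y: "countably_tight_at Y y" "y \<in> topspace Y"
  shows "countably_tight_at (prod_topology X Y) (x, y)"
  unfolding countably_tight_at_def
proof (intro allI impI, elim conjE)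
  fix A assume A: "A \<subseteq> topspace (prod_topology X Y)" "(x, y) \<in> prod_topology X Y closure_of A"
  show "\<exists>B \<subseteq> A. countable B \<and> (x, y) \<in> prod_topology X Y closure_of B"
  proof (cases "y \<in> Y closure_of {b. (x, b) \<in> A}")
    case True
    then show ?thesis using countable_closure_of_prod_slice[OF Y(1) \<open>x \<in> topspace X\<close> A(1)] by blast
  next
    case False
    then obtain V where V: "openin Y V" "y \<in> V" "\<And>b. b \<in> V \<Longrightarrow> (x, b) \<notin> A"
      using Y(2) unfolding in_closure_of by blast
    define A' where "A' = (topspace X \<times> V) \<inter> A"
    have "openin (prod_topology X Y) (topspace X \<times> V)"
      using V(1) by (simp add: openin_prod_Times_iff)
    then have "(x, y) \<in> prod_topology X Y closure_of A'"
      using openin_Int_closure_of_subset A(2) V(2) \<open>x \<in> topspace X\<close> unfolding A'_def by blast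
    moreover have "A' \<subseteq> topspace (prod_topology X Y)" "\<And>b. (x, b) \<notin> A'"
      using A(1) V(3) by (auto simp: A'_def)
    ultimately obtain B where "B \<subseteq> A'" "countable B" "(x, y) \<in> prod_topology X Y closure_of B"
      using G1_Omega_II_winning_countable_closure_of[OF win Y] by blast
    then show ?thesis unfolding A'_def by blast
  qed
qed

theorem corollary2p4:
  fixes X :: "'a topology" and x :: 'a
  assumes "tychonoff_space X"
    and "x \<in> topspace X"
    and "G1_Omega_II_has_winning_strategy X x"
  shows "\<forall>(Y :: 'b topology) y. y \<in> topspace Y \<and> countably_tight_at Y y \<longrightarrow>
           countably_tight_at (prod_topology X Y) (x, y)"
proof -
  obtain \<sigma> where "G1_Omega_II_winning X x \<sigma>"
    using assms(3) unfolding G1_Omega_II_has_winning_strategy_def by blast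
  with assms(2) show ?thesis
    using G1_Omega_II_winning_productively_countably_tight by metis
qed

end
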